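(* For $N\ge1$, \[Z_N(\{u\}_N|\{w\}_N)=\prod_{j=1}^N(1-t)cu_j\prod_{1\le j<k\le N}\frac{tu_j-u_k}{u_j-u_k}\sum_{\sigma\in S_N}\prod_{(j,k)\in\mathrm{Inv}(\sigma)}\frac{u_{\sigma(k)}-tu_{\sigma(j)}}{tu_{\sigma(k)}-u_{\sigma(j)}}\prod_{1\le j<k\le N}(au_{\sigma(j)}+bw_k)\prod_{1\le k<j\le N}(eu_{\sigma(j)}+fw_k)\] as rational functions of $u_1,\dots,u_N,w_1,\dots,w_N$.
   Context: Fix complex parameters $t,a,b,c,d,e,f$, all nonzero, with $t\neq1$, satisfying $cd+af=0$ and $tcd+be=0$. The inhomogeneous $L$-operator $L_{aj}(u,w)$ on $W_a\otimes V_j$ ($\cong\mathbb{C}^2\otimes\mathbb{C}^2$, basis $|0\rangle,|1\rangle$) has matrix elements ${}_a\langle\gamma|{}_j\langle\delta|L_{aj}(u,w)|\alpha\rangle_a|\beta\rangle_j=[L(u,w)]^{\gamma\delta}_{\alpha\beta}$: $[L]^{00}_{00}=au+bw$, $[L]^{01}_{01}=atu+bw$, $[L]^{01}_{10}=(1-t)cu$, $[L]^{10}_{01}=(1-t)dw$, $[L]^{10}_{10}=eu+fw$, $[L]^{11}_{11}=eu+tfw$, all others $0$. Define $B_N(u|\{w\}_N)={}_a\langle0|L_{aN}(u,w_N)\cdots L_{a1}(u,w_1)|1\rangle_a$ on $V_1\otimes\cdots\otimes V_N$ and $Z_N(\{u\}_N|\{w\}_N)=\langle1\cdots N|B_N(u_1|\{w\}_N)\cdots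 B_N(u_N|\{w\}_N)|\Omega\rangle$ with $|\Omega\rangle=|0\rangle^{\otimes N}$, $\langle1\cdots N|=\langle1|^{\otimes N}$. For $\sigma\in S_N$, $\mathrm{Inv}(\sigma)=\{(j,k):j<k,\ \sigma(j)>\sigma(k)\}$. *)

theory Defs
  imports Complex_Main "HOL-Combinatorics.Permutations"
begin

text \<open>Matrix elements [L(u,w)]^{gamma delta}_{alpha beta} of the inhomogeneous L-operator,
  with gamma/alpha the outgoing/incoming auxiliary index and delta/beta the
  outgoing/incoming quantum index (all in {0,1}).\<close>
definition Lel :: "complex \<Rightarrow> complex \<Rightarrow> complex \<Rightarrow> complex \<Rightarrow> complex \<Rightarrow> complex \<Rightarrow> complex
    \<Rightarrow> complex \<Rightarrow> complex \<Rightarrow> nat \<Rightarrow> nat \<Rightarrow> nat \<Rightarrow> nat \<Rightarrow> complex" where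
  "Lel t a b c d e f u w \<gamma> \<delta> \<alpha> \<beta> =
     (if (\<gamma>, \<delta>, \<alpha>, \<beta>) = (0,0,0,0) then a*u + b*w
      else if (\<gamma>, \<delta>, \<alpha>, \<beta>) = (0,1,0,1) then a*t*u + b*w
      else if (\<gamma>, \<delta>, \<alpha>, \<beta>) = (0,1,1,0) then (1-t)*c*u
      else if (\<gamma>, \<delta>, \<alpha>, \<beta>) = (1,0,0,1) then (1-t)*d*w
      else if (\<gamma>, \<delta>, \<alpha>, \<beta>) = (1,0,1,0) then e*u + f*w
      else if (\<gamma>, \<delta>, \<alpha>, \<beta>) = (1,1,1,1) then e*u + t*f*w
      else 0)"

text \<open>Matrix element of the auxiliary-space monodromy
  L_{a,N} ... L_{a,1} between aux state alpha (in) and gamma (out); the lists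
  are indexed by sites 1,...,N in order (site 1 acts first).\<close>
fun Bch :: "complex \<Rightarrow> complex \<Rightarrow> complex \<Rightarrow> complex \<Rightarrow> complex \<Rightarrow> complex \<Rightarrow> complex
    \<Rightarrow> complex \<Rightarrow> complex list \<Rightarrow> nat list \<Rightarrow> nat list \<Rightarrow> nat \<Rightarrow> nat \<Rightarrow> complex" where
  "Bch t a b c d e f u [] [] [] \<alpha> \<gamma> = (if \<alpha> = \<gamma> then 1 else 0)"
| "Bch t a b c d e f u (w # ws) (\<delta> # ds) (\<beta> # bs) \<alpha> \<gamma> =
     (\<Sum>\<alpha>'\<in>{0,1}. Lel t a b c d e f u w \<alpha>' \<delta> \<alpha> \<beta> * Bch t a b c d e f u ws ds bs \<alpha>' \<gamma>)"
| "Bch t a b c d e f u _ _ _ \<alpha> \<gamma> = 0"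

definition configs :: "nat \<Rightarrow> nat list set" where
  "configs N = {xs. length xs = N \<and> set xs \<subseteq> {0,1}}"

text \<open>Action of B_N(u|{w}) (matrix element <out|B|in> = Bch ... 1 0) on a vector.\<close>
definition Bapp :: "complex \<Rightarrow> complex \<Rightarrow> complex \<Rightarrow> complex \<Rightarrow> complex \<Rightarrow> complex \<Rightarrow> complex
    \<Rightarrow> complex \<Rightarrow> complex list \<Rightarrow> (nat list \<Rightarrow> complex) \<Rightarrow> (nat list \<Rightarrow> complex)" where
  "Bapp t a b c d e f u ws v = (\<lambda>out. \<Sum>inp\<in>configs (length ws).
      Bch t a b c d e f u ws out inp 1 0 * v inp)"

text \<open>B(x_1) B(x_2) ... B(x_m) |Omega>, with |Omega> = |0...0>.\<close>
fun Bprod :: "complex \<Rightarrow> complex \<Rightarrow> complex \<Rightarrow> complex \<Rightarrow> complex \<Rightarrow> complex \<Rightarrow> complex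
    \<Rightarrow> complex list \<Rightarrow> complex list \<Rightarrow> (nat list \<Rightarrow> complex)" where
  "Bprod t a b c d e f ws [] = (\<lambda>xs. if xs = replicate (length ws) 0 then 1 else 0)"
| "Bprod t a b c d e f ws (x # xs) = Bapp t a b c d e f x ws (Bprod t a b c d e f ws xs)"

definition ZN :: "complex \<Rightarrow> complex \<Rightarrow> complex \<Rightarrow> complex \<Rightarrow> complex \<Rightarrow> complex \<Rightarrow> complex
    \<Rightarrow> nat \<Rightarrow> (nat \<Rightarrow> complex) \<Rightarrow> (nat \<Rightarrow> complex) \<Rightarrow> complex" where
  "ZN t a b c d e f N u w =
     Bprod t a b c d e f (map w [1..<N+1]) (map u [1..<N+1]) (replicate N 1)"

definition Inv :: "nat \<Rightarrow> (nat \<Rightarrow> nat) \<Rightarrow> (nat \<times> nat) set" where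
  "Inv N \<sigma> = {(j,k). j \<in> {1..N} \<and> k \<in> {1..N} \<and> j < k \<and> \<sigma> j > \<sigma> k}"

end

theory Submission
  imports Defs "HOL-Computational_Algebra.Polynomial"
begin

text \<open>The argument is of Izergin--Korepin type. Under the two free-fermion conditions the
  L-operator satisfies an RLL relation, hence an RTT relation, so the operators \<open>B(u)\<close> commute
  and \<open>Z\<^sub>N\<close> is symmetric in \<open>u\<^sub>1, \<dots>, u\<^sub>N\<close>. Expanding along the first quantum site shows
  that \<open>Z\<^sub>N\<close> is a polynomial of degree at most \<open>N - 1\<close> in \<open>w\<^sub>1\<close>; at \<open>w\<^sub>1 = -e u\<^sub>N / f\<close>
  the weight \<open>e u\<^sub>N + f w\<^sub>1\<close> vanishes, the first column freezes and \<open>Z\<^sub>N\<close> reduces to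
  \<open>Z\<^sub>N\<^sub>-\<^sub>1(u\<^sub>1, \<dots>, u\<^sub>N\<^sub>-\<^sub>1 | w\<^sub>2, \<dots>, w\<^sub>N)\<close> times explicit factors. The right-hand side
  has the same symmetry, degree bound and reduction, so by symmetry both sides agree at the \<open>N\<close>
  distinct points \<open>w\<^sub>1 = -e u\<^sub>j / f\<close> and therefore identically; induct on \<open>N\<close>. Finally the
  product over pairs evaluated at permuted arguments is compared with the unpermuted one,
  which produces the factors indexed by the inversions.\<close>

section \<open>Polynomial functions of bounded degree\<close>

definition polyfun_le :: "nat \<Rightarrow> ('a::comm_ring_1 \<Rightarrow> 'a) \<Rightarrow> bool" where
  "polyfun_le n F \<longleftrightarrow> (\<exists>p. degree p \<le> n \<and> (\<forall>x. F x = poly p x))"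

lemma polyfun_le_const: "polyfun_le n (\<lambda>x. k)"
  unfolding polyfun_le_def by (rule exI[of _ "[:k:]"]) simp

lemma polyfun_le_affine: "polyfun_le 1 (\<lambda>x. k + l * x)"
  unfolding polyfun_le_def by (rule exI[of _ "[:k, l:]"]) simp

lemma polyfun_le_cong: "polyfun_le n F \<Longrightarrow> (\<And>x. G x = F x) \<Longrightarrow> polyfun_le n G"
  unfolding polyfun_le_def by metis

lemma polyfun_le_add: "polyfun_le n F \<Longrightarrow> polyfun_le n G \<Longrightarrow> polyfun_le n (\<lambda>x. F x + G x)"
  unfolding polyfun_le_def by (metis degree_add_le poly_add)

lemma polyfun_le_diff: "polyfun_le n F \<Longrightarrow> polyfun_le n G \<Longrightarrow> polyfun_le n (\<lambda>x. F x - G x)"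
  unfolding polyfun_le_def by (metis degree_diff_le poly_diff)

lemma polyfun_le_mult:
  "polyfun_le n F \<Longrightarrow> polyfun_le m G \<Longrightarrow> n + m \<le> k \<Longrightarrow> polyfun_le k (\<lambda>x. F x * G x)"
  unfolding polyfun_le_def by (metis add_mono degree_mult_le order_trans poly_mult)

lemma polyfun_le_cmult: "polyfun_le n F \<Longrightarrow> polyfun_le n (\<lambda>x. k * F x)"
  unfolding polyfun_le_def by (metis degree_smult_le order_trans poly_smult)

lemma polyfun_le_multc: "polyfun_le n F \<Longrightarrow> polyfun_le n (\<lambda>x. F x * k)"
  unfolding polyfun_le_def by (metis degree_smult_le order_trans poly_smult mult.commute)

lemma polyfun_le_sum:
  "finite A \<Longrightarrow> (\<And>i. i \<in> A \<Longrightarrow> polyfun_le n (F i)) \<Longrightarrow> polyfun_le n (\<lambda>x. \<Sum>i\<in>A. F i x)"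
  by (induction A rule: finite_induct) (auto simp: polyfun_le_const intro: polyfun_le_add)

lemma polyfun_le_prod:
  "finite A \<Longrightarrow> (\<And>i. i \<in> A \<Longrightarrow> polyfun_le (m i) (F i)) \<Longrightarrow>
    polyfun_le (\<Sum>i\<in>A. m i) (\<lambda>x. \<Prod>i\<in>A. F i x)"
  by (induction A rule: finite_induct) (auto simp: polyfun_le_const intro!: polyfun_le_mult[OF _ _ order.refl])

lemma polyfun_le_eq_0:
  fixes F :: "'a::idom \<Rightarrow> 'a"
  assumes "polyfun_le n F" "finite A" "n < card A" "\<And>x. x \<in> A \<Longrightarrow> F x = 0"
  shows "F y = 0"
proof -
  obtain p where p: "degree p \<le> n" "\<And>x. F x = poly p x"
    using assms(1) unfolding polyfun_le_def by blast
  have "p = 0"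
  proof (rule ccontr)
    assume "p \<noteq> 0"
    have "A \<subseteq> {x. poly p x = 0}" using assms(4) p by auto
    then have "card A \<le> card {x. poly p x = 0}"
      using poly_roots_finite[OF \<open>p \<noteq> 0\<close>] by (rule card_mono[rotated])
    also have "\<dots> \<le> degree p" using \<open>p \<noteq> 0\<close> by (rule card_poly_roots_bound)
    finally show False using p(1) assms(3) by simp
  qed
  then show ?thesis using p by simp
qed

lemma polyfun_le_eq_0_infinite:
  fixes F :: "'a::idom \<Rightarrow> 'a"
  assumes "polyfun_le n F" "infinite {x. F x = 0}"
  shows "F y = 0"
proof -
  obtain A where "finite A" "card A = Suc n" "A \<subseteq> {x. F x = 0}"
    using infinite_arbitrarily_large[OF assms(2)] by blast
  then show ?thesis using polyfun_le_eq_0[OF assms(1), of A] by auto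
qed

section \<open>Configurations and the L-operator\<close>

lemma configs_0: "configs 0 = {[]}"
  by (auto simp: configs_def)

lemma configs_Suc: "configs (Suc n) = (\<lambda>(x,xs). x#xs) ` ({0,1} \<times> configs n)"
  unfolding configs_def by (auto simp: image_iff length_Suc_conv)

lemma finite_configs: "finite (configs n)"
  by (induction n) (auto simp: configs_0 configs_Suc)

lemma sum_configs_Suc:
  "(\<Sum>xs\<in>configs (Suc n). F xs) = (\<Sum>x\<in>{0::nat,1}. \<Sum>xs\<in>configs n. F (x#xs))"
proof -
  have "inj_on (\<lambda>(x,xs). x#xs) ({0::nat,1} \<times> configs n)" by (auto simp: inj_on_def)
  then have "(\<Sum>xs\<in>configs (Suc n). F xs) = (\<Sum>p\<in>{0::nat,1} \<times> configs n. F (fst p # snd p))"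
    unfolding configs_Suc by (subst sum.reindex) (auto simp: case_prod_beta intro!: sum.cong)
  also have "\<dots> = (\<Sum>x\<in>{0::nat,1}. \<Sum>xs\<in>configs n. F (x#xs))"
    by (simp add: sum.cartesian_product case_prod_beta)
  finally show ?thesis .
qed

lemma polyfun_le_Lel_u: "polyfun_le 1 (\<lambda>x. Lel t a b c d e f x w \<gamma> \<delta> \<alpha> \<beta>)"
  by (rule polyfun_le_cong[OF polyfun_le_affine[of "Lel t a b c d e f 0 w \<gamma> \<delta> \<alpha> \<beta>"
        "Lel t a b c d e f 1 w \<gamma> \<delta> \<alpha> \<beta> - Lel t a b c d e f 0 w \<gamma> \<delta> \<alpha> \<beta>"]])
     (simp add: Lel_def algebra_simps)

lemma polyfun_le_Lel_w: "polyfun_le 1 (\<lambda>x. Lel t a b c d e f u x \<gamma> \<delta> \<alpha> \<beta>)"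
  by (rule polyfun_le_cong[OF polyfun_le_affine[of "Lel t a b c d e f u 0 \<gamma> \<delta> \<alpha> \<beta>"
        "Lel t a b c d e f u 1 \<gamma> \<delta> \<alpha> \<beta> - Lel t a b c d e f u 0 \<gamma> \<delta> \<alpha> \<beta>"]])
     (simp add: Lel_def algebra_simps)

lemma Lel_simps:
  "Lel t a b c d e f u w 0 0 0 0 = a*u + b*w"
  "Lel t a b c d e f u w 0 0 0 (Suc 0) = 0"
  "Lel t a b c d e f u w 0 0 (Suc 0) 0 = 0"
  "Lel t a b c d e f u w 0 0 (Suc 0) (Suc 0) = 0"
  "Lel t a b c d e f u w 0 (Suc 0) 0 0 = 0"
  "Lel t a b c d e f u w 0 (Suc 0) 0 (Suc 0) = a*t*u + b*w"
  "Lel t a b c d e f u w 0 (Suc 0) (Suc 0) 0 = (1-t)*c*u"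
  "Lel t a b c d e f u w 0 (Suc 0) (Suc 0) (Suc 0) = 0"
  "Lel t a b c d e f u w (Suc 0) 0 0 0 = 0"
  "Lel t a b c d e f u w (Suc 0) 0 0 (Suc 0) = (1-t)*d*w"
  "Lel t a b c d e f u w (Suc 0) 0 (Suc 0) 0 = e*u + f*w"
  "Lel t a b c d e f u w (Suc 0) 0 (Suc 0) (Suc 0) = 0"
  "Lel t a b c d e f u w (Suc 0) (Suc 0) 0 0 = 0"
  "Lel t a b c d e f u w (Suc 0) (Suc 0) 0 (Suc 0) = 0"
  "Lel t a b c d e f u w (Suc 0) (Suc 0) (Suc 0) 0 = 0"
  "Lel t a b c d e f u w (Suc 0) (Suc 0) (Suc 0) (Suc 0) = e*u + t*f*w"
  by (simp_all add: Lel_def)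

section \<open>Commutation of the B-operators\<close>

lemma double_sum_mult_swap:
  fixes f g :: "_ \<Rightarrow> _ \<Rightarrow> 'a::comm_semiring_0"
  shows "(\<Sum>x\<in>A. \<Sum>x'\<in>A'. f x x' * (\<Sum>y\<in>B. \<Sum>y'\<in>B'. g y y' * h x x' y y')) =
    (\<Sum>y\<in>B. \<Sum>y'\<in>B'. g y y' * (\<Sum>x\<in>A. \<Sum>x'\<in>A'. f x x' * h x x' y y'))"
proof -
  have "(\<Sum>x\<in>A. \<Sum>x'\<in>A'. f x x' * (\<Sum>y\<in>B. \<Sum>y'\<in>B'. g y y' * h x x' y y')) =
     (\<Sum>x\<in>A. \<Sum>x'\<in>A'. \<Sum>y\<in>B. \<Sum>y'\<in>B'. g y y' * (f x x' * h x x' y y'))"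
    by (simp add: sum_distrib_left mult.left_commute)
  also have "\<dots> = (\<Sum>y\<in>B. \<Sum>y'\<in>B'. \<Sum>x\<in>A. \<Sum>x'\<in>A'. g y y' * (f x x' * h x x' y y'))"
    by (subst sum.swap, subst (2) sum.swap, subst (3) sum.swap) (simp add: sum.swap[of _ A'])
  finally show ?thesis by (simp add: sum_distrib_left)
qed

lemma polyfun_le_Bch: "polyfun_le (length ws) (\<lambda>x. Bch t a b c d e f x ws ds bs \<alpha> \<gamma>)"
proof (induction ws arbitrary: ds bs \<alpha>)
  case Nil
  then show ?case by (cases ds; cases bs) (simp_all add: polyfun_le_const)
next
  case (Cons w ws)
  then show ?case
    by (cases ds; cases bs)
       (auto simp: polyfun_le_const intro!: polyfun_le_add polyfun_le_mult[OF polyfun_le_Lel_u])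
qed

context
  fixes t a b c d e f :: complex
begin

definition Rmat :: "complex \<Rightarrow> complex \<Rightarrow> nat \<Rightarrow> nat \<Rightarrow> nat \<Rightarrow> nat \<Rightarrow> complex" where
  "Rmat u v \<gamma>1 \<gamma>2 \<alpha>1 \<alpha>2 =
     (if (\<gamma>1,\<gamma>2,\<alpha>1,\<alpha>2) \<in> {(0,0,0,0), (1,1,1,1)} then t*v - u
      else if (\<gamma>1,\<gamma>2,\<alpha>1,\<alpha>2) = (0,1,0,1) then t*(v - u)
      else if (\<gamma>1,\<gamma>2,\<alpha>1,\<alpha>2) = (1,0,1,0) then v - u
      else if (\<gamma>1,\<gamma>2,\<alpha>1,\<alpha>2) = (0,1,1,0) then (t - 1)*u
      else if (\<gamma>1,\<gamma>2,\<alpha>1,\<alpha>2) = (1,0,0,1) then (t - 1)*v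
      else 0)"

lemma Rmat_simps:
  "Rmat u v 0 0 0 0 = t*v - u"
  "Rmat u v 0 0 0 (Suc 0) = 0"
  "Rmat u v 0 0 (Suc 0) 0 = 0"
  "Rmat u v 0 0 (Suc 0) (Suc 0) = 0"
  "Rmat u v 0 (Suc 0) 0 0 = 0"
  "Rmat u v 0 (Suc 0) 0 (Suc 0) = t*(v - u)"
  "Rmat u v 0 (Suc 0) (Suc 0) 0 = (t - 1)*u"
  "Rmat u v 0 (Suc 0) (Suc 0) (Suc 0) = 0"
  "Rmat u v (Suc 0) 0 0 0 = 0"
  "Rmat u v (Suc 0) 0 0 (Suc 0) = (t - 1)*v"
  "Rmat u v (Suc 0) 0 (Suc 0) 0 = v - u"
  "Rmat u v (Suc 0) 0 (Suc 0) (Suc 0) = 0"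
  "Rmat u v (Suc 0) (Suc 0) 0 0 = 0"
  "Rmat u v (Suc 0) (Suc 0) 0 (Suc 0) = 0"
  "Rmat u v (Suc 0) (Suc 0) (Suc 0) 0 = 0"
  "Rmat u v (Suc 0) (Suc 0) (Suc 0) (Suc 0) = t*v - u"
  by (simp_all add: Rmat_def)

definition LL :: "complex \<Rightarrow> complex \<Rightarrow> complex \<Rightarrow> nat \<Rightarrow> nat \<Rightarrow> nat \<Rightarrow> nat \<Rightarrow> nat \<Rightarrow> nat \<Rightarrow> complex" where
  "LL u v w \<alpha>1 \<gamma>1 \<alpha>2 \<gamma>2 \<delta> \<beta> =
     (\<Sum>m\<in>{0::nat,1}. Lel t a b c d e f u w \<gamma>1 \<delta> \<alpha>1 m * Lel t a b c d e f v w \<gamma>2 m \<alpha>2 \<beta>)"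

lemma LL_eq_0: "\<delta> \<notin> {0,1} \<or> \<beta> \<notin> {0,1} \<Longrightarrow> LL u v w \<alpha>1 \<gamma>1 \<alpha>2 \<gamma>2 \<delta> \<beta> = 0"
  by (auto simp: LL_def Lel_def)

definition TT :: "complex \<Rightarrow> complex \<Rightarrow> complex list \<Rightarrow> nat \<Rightarrow> nat \<Rightarrow> nat \<Rightarrow> nat \<Rightarrow>
    nat list \<Rightarrow> nat list \<Rightarrow> complex" where
  "TT u v ws \<alpha>1 \<gamma>1 \<alpha>2 \<gamma>2 out inp = (\<Sum>mid\<in>configs (length ws).
      Bch t a b c d e f u ws out mid \<alpha>1 \<gamma>1 * Bch t a b c d e f v ws mid inp \<alpha>2 \<gamma>2)"

lemma TT_Nil:
  "TT u v [] \<alpha>1 \<gamma>1 \<alpha>2 \<gamma>2 out inp = (if out = [] \<and> inp = [] \<and> \<alpha>1 = \<gamma>1 \<and> \<alpha>2 = \<gamma>2 then 1 else 0)"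
  by (cases out; cases inp) (auto simp: TT_def configs_0)

lemma TT_Cons_Nil: "TT u v (w#ws) \<alpha>1 \<gamma>1 \<alpha>2 \<gamma>2 [] inp = 0" "TT u v (w#ws) \<alpha>1 \<gamma>1 \<alpha>2 \<gamma>2 out [] = 0"
proof -
  have "Bch t a b c d e f v (w#ws) mid [] \<alpha>2 \<gamma>2 = 0" for mid by (cases mid) auto
  then show "TT u v (w#ws) \<alpha>1 \<gamma>1 \<alpha>2 \<gamma>2 out [] = 0" by (simp add: TT_def)
qed (simp add: TT_def)

lemma TT_Cons: "TT u v (w#ws) \<alpha>1 \<gamma>1 \<alpha>2 \<gamma>2 (\<delta>#out) (\<beta>#inp) =
   (\<Sum>x1\<in>{0::nat,1}. \<Sum>x2\<in>{0::nat,1}. LL u v w \<alpha>1 x1 \<alpha>2 x2 \<delta> \<beta> * TT u v ws x1 \<gamma>1 x2 \<gamma>2 out inp)"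
proof -
  let ?L = "Lel t a b c d e f" and ?B = "Bch t a b c d e f" and ?C = "configs (length ws)"
  have "TT u v (w#ws) \<alpha>1 \<gamma>1 \<alpha>2 \<gamma>2 (\<delta>#out) (\<beta>#inp) =
     (\<Sum>m\<in>{0::nat,1}. \<Sum>mid\<in>?C.
        (\<Sum>x1\<in>{0::nat,1}. ?L u w x1 \<delta> \<alpha>1 m * ?B u ws out mid x1 \<gamma>1) *
        (\<Sum>x2\<in>{0::nat,1}. ?L v w x2 m \<alpha>2 \<beta> * ?B v ws mid inp x2 \<gamma>2))"
    by (simp add: TT_def sum_configs_Suc)
  also have "\<dots> = (\<Sum>x1\<in>{0::nat,1}. \<Sum>x2\<in>{0::nat,1}. \<Sum>m\<in>{0::nat,1}. \<Sum>mid\<in>?C.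
        (?L u w x1 \<delta> \<alpha>1 m * ?L v w x2 m \<alpha>2 \<beta>) * (?B u ws out mid x1 \<gamma>1 * ?B v ws mid inp x2 \<gamma>2))"
    by (simp add: sum.distrib algebra_simps)
  also have "\<dots> = (\<Sum>x1\<in>{0::nat,1}. \<Sum>x2\<in>{0::nat,1}.
       LL u v w \<alpha>1 x1 \<alpha>2 x2 \<delta> \<beta> * TT u v ws x1 \<gamma>1 x2 \<gamma>2 out inp)"
    by (simp add: LL_def TT_def sum_distrib_left sum_distrib_right sum.distrib algebra_simps)
  finally show ?thesis .
qed

lemma Bapp_Bapp_eq_TT: "Bapp t a b c d e f u ws (Bapp t a b c d e f v ws \<psi>) out =
  (\<Sum>inp\<in>configs (length ws). TT u v ws 1 0 1 0 out inp * \<psi> inp)"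
  unfolding Bapp_def TT_def
  by (simp add: sum_distrib_left sum_distrib_right mult.assoc) (rule sum.swap)

context
  assumes free_fermion: "c*d + a*f = 0" "t*c*d + b*e = 0"
    and a_nonzero: "a \<noteq> 0" and b_nonzero: "b \<noteq> 0"
begin

lemma RLL:
  assumes "\<gamma>1 \<in> {0,1}" "\<gamma>2 \<in> {0,1}" "\<alpha>1 \<in> {0,1}" "\<alpha>2 \<in> {0,1}"
  shows "(\<Sum>y1\<in>{0::nat,1}. \<Sum>y2\<in>{0::nat,1}. LL u v w \<alpha>1 y1 \<alpha>2 y2 \<delta> \<beta> * Rmat u v \<gamma>1 \<gamma>2 y1 y2)
       = (\<Sum>y1\<in>{0::nat,1}. \<Sum>y2\<in>{0::nat,1}. Rmat u v y1 y2 \<alpha>1 \<alpha>2 * LL v u w y2 \<gamma>2 y1 \<gamma>1 \<delta> \<beta>)"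
proof (cases "\<delta> \<in> {0,1} \<and> \<beta> \<in> {0,1}")
  case True
  have f: "f = - (c*d)/a" and e: "e = - (t*c*d)/b"
    using free_fermion a_nonzero b_nonzero by (simp_all add: field_simps add_eq_0_iff2)
  have "\<forall>\<gamma>1\<in>{0::nat,1}. \<forall>\<gamma>2\<in>{0::nat,1}. \<forall>\<alpha>1\<in>{0::nat,1}. \<forall>\<alpha>2\<in>{0::nat,1}. \<forall>\<delta>\<in>{0::nat,1}. \<forall>\<beta>\<in>{0::nat,1}.
     (\<Sum>y1\<in>{0::nat,1}. \<Sum>y2\<in>{0::nat,1}. LL u v w \<alpha>1 y1 \<alpha>2 y2 \<delta> \<beta> * Rmat u v \<gamma>1 \<gamma>2 y1 y2)
       = (\<Sum>y1\<in>{0::nat,1}. \<Sum>y2\<in>{0::nat,1}. Rmat u v y1 y2 \<alpha>1 \<alpha>2 * LL v u w y2 \<gamma>2 y1 \<gamma>1 \<delta> \<beta>)"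
    using a_nonzero b_nonzero
    apply (simp add: Rmat_simps LL_def Lel_simps)
    apply (intro conjI)
    apply (simp_all add: algebra_simps)
    apply (simp_all add: f e field_simps)
    done
  from this[rule_format, OF assms True[THEN conjunct1] True[THEN conjunct2]] show ?thesis .
next
  case False
  then show ?thesis by (simp add: LL_eq_0)
qed

lemma RTT:
  assumes "\<gamma>1 \<in> {0,1}" "\<gamma>2 \<in> {0,1}"
  shows "\<alpha>1 \<in> {0,1} \<Longrightarrow> \<alpha>2 \<in> {0,1} \<Longrightarrow>
    (\<Sum>x1\<in>{0::nat,1}. \<Sum>x2\<in>{0::nat,1}. Rmat u v \<gamma>1 \<gamma>2 x1 x2 * TT u v ws \<alpha>1 x1 \<alpha>2 x2 out inp)
  = (\<Sum>y1\<in>{0::nat,1}. \<Sum>y2\<in>{0::nat,1}. Rmat u v y1 y2 \<alpha>1 \<alpha>2 * TT v u ws y2 \<gamma>2 y1 \<gamma>1 out inp)"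
proof (induction ws arbitrary: \<alpha>1 \<alpha>2 out inp)
  case Nil
  then show ?case using assms by (elim insertE emptyE; simp add: TT_Nil)
next
  case (Cons w ws)
  let ?B = "{0::nat,1}" and ?R = "Rmat u v"
  show ?case
  proof (cases out; cases inp)
    fix \<delta> out' \<beta> inp' assume out: "out = \<delta> # out'" and inp: "inp = \<beta> # inp'"
    have TT_v_u: "(\<Sum>x1\<in>?B. \<Sum>x2\<in>?B. TT v u ws x2 \<gamma>2 x1 \<gamma>1 out' inp' * LL v u w y2 x2 y1 x1 \<delta> \<beta>)
        = TT v u (w#ws) y2 \<gamma>2 y1 \<gamma>1 out inp" for y1 y2
      unfolding out inp TT_Cons by (simp only: mult.commute) (rule sum.swap)
    have "(\<Sum>x1\<in>?B. \<Sum>x2\<in>?B. ?R \<gamma>1 \<gamma>2 x1 x2 * TT u v (w#ws) \<alpha>1 x1 \<alpha>2 x2 out inp)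
        = (\<Sum>x1\<in>?B. \<Sum>x2\<in>?B. ?R \<gamma>1 \<gamma>2 x1 x2 *
             (\<Sum>y1\<in>?B. \<Sum>y2\<in>?B. LL u v w \<alpha>1 y1 \<alpha>2 y2 \<delta> \<beta> * TT u v ws y1 x1 y2 x2 out' inp'))"
      by (simp only: out inp TT_Cons)
    also have "\<dots> = (\<Sum>y1\<in>?B. \<Sum>y2\<in>?B. LL u v w \<alpha>1 y1 \<alpha>2 y2 \<delta> \<beta> *
             (\<Sum>x1\<in>?B. \<Sum>x2\<in>?B. ?R \<gamma>1 \<gamma>2 x1 x2 * TT u v ws y1 x1 y2 x2 out' inp'))"
      by (rule double_sum_mult_swap)
    also have "\<dots> = (\<Sum>y1\<in>?B. \<Sum>y2\<in>?B. LL u v w \<alpha>1 y1 \<alpha>2 y2 \<delta> \<beta> *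
             (\<Sum>x1\<in>?B. \<Sum>x2\<in>?B. TT v u ws x2 \<gamma>2 x1 \<gamma>1 out' inp' * ?R x1 x2 y1 y2))"
      by (intro sum.cong refl) (simp only: Cons.IH, simp only: mult.commute)
    also have "\<dots> = (\<Sum>x1\<in>?B. \<Sum>x2\<in>?B. TT v u ws x2 \<gamma>2 x1 \<gamma>1 out' inp' *
             (\<Sum>y1\<in>?B. \<Sum>y2\<in>?B. LL u v w \<alpha>1 y1 \<alpha>2 y2 \<delta> \<beta> * ?R x1 x2 y1 y2))"
      by (rule double_sum_mult_swap)
    also have "\<dots> = (\<Sum>x1\<in>?B. \<Sum>x2\<in>?B. TT v u ws x2 \<gamma>2 x1 \<gamma>1 out' inp' *
             (\<Sum>y1\<in>?B. \<Sum>y2\<in>?B. ?R y1 y2 \<alpha>1 \<alpha>2 * LL v u w y2 x2 y1 x1 \<delta> \<beta>))"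
      by (intro sum.cong refl) (simp only: Cons.prems RLL)
    also have "\<dots> = (\<Sum>y1\<in>?B. \<Sum>y2\<in>?B. ?R y1 y2 \<alpha>1 \<alpha>2 *
             (\<Sum>x1\<in>?B. \<Sum>x2\<in>?B. TT v u ws x2 \<gamma>2 x1 \<gamma>1 out' inp' * LL v u w y2 x2 y1 x1 \<delta> \<beta>))"
      by (rule double_sum_mult_swap)
    finally show ?case by (simp only: TT_v_u)
  qed (simp_all add: TT_Cons_Nil)
qed

lemma TT_B_commute: "TT u v ws 1 0 1 0 out inp = TT v u ws 1 0 1 0 out inp"
proof -
  \<comment> \<open>RTT only yields the claim multiplied by \<open>t v - u\<close>; the factor goes since both sides
    are polynomials in \<open>u\<close>\<close>
  let ?F = "\<lambda>x. TT x v ws 1 0 1 0 out inp - TT v x ws 1 0 1 0 out inp"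
  have "polyfun_le (length ws) ?F"
    unfolding TT_def
    by (intro polyfun_le_diff polyfun_le_sum finite_configs
        polyfun_le_mult[OF polyfun_le_Bch polyfun_le_const] polyfun_le_mult[OF polyfun_le_const polyfun_le_Bch])
       simp_all
  moreover have "infinite {x. ?F x = 0}"
  proof (rule infinite_super)
    show "UNIV - {t*v} \<subseteq> {x. ?F x = 0}"
    proof
      fix x assume "x \<in> UNIV - {t*v}"
      then show "x \<in> {x. ?F x = 0}"
        using RTT[of 0 0 1 1 x v ws out inp] by (simp add: Rmat_simps)
    qed
  qed (simp add: infinite_UNIV_char_0)
  ultimately show ?thesis using polyfun_le_eq_0_infinite by fastforce
qed

lemma Bapp_commute:
  "Bapp t a b c d e f u ws (Bapp t a b c d e f v ws \<psi>) = Bapp t a b c d e f v ws (Bapp t a b c d e f u ws \<psi>)"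
  by (rule ext) (simp only: Bapp_Bapp_eq_TT TT_B_commute[of u v])

lemma Bprod_mset_eq: "mset us = mset vs \<Longrightarrow> Bprod t a b c d e f ws us = Bprod t a b c d e f ws vs"
proof (induction us arbitrary: vs)
  case Nil
  then show ?case by simp
next
  case (Cons x us)
  then obtain xs ys where vs: "vs = xs @ x # ys"
    by (metis list.set_intros(1) set_mset_mset split_list)
  have Bprod_move_front: "Bprod t a b c d e f ws (xs @ x # ys) = Bprod t a b c d e f ws (x # xs @ ys)"
    by (induction xs) (simp_all add: Bapp_commute)
  from Cons.prems have "mset us = mset (xs @ ys)" by (simp add: vs)
  then have "Bprod t a b c d e f ws us = Bprod t a b c d e f ws (xs @ ys)" by (rule Cons.IH)
  then show ?case by (simp add: vs Bprod_move_front)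
qed

lemma ZN_permute:
  assumes "p permutes {1..N}"
  shows "ZN t a b c d e f N (u \<circ> p) w = ZN t a b c d e f N u w"
proof -
  have "mset (map p [1..<N+1]) = mset [1..<N+1]"
  proof (rule iffD1[OF set_eq_iff_mset_eq_distinct])
    show "distinct (map p [1..<N+1])"
      using permutes_inj[OF assms] by (simp add: distinct_map inj_on_subset)
    have "set [1..<N+1] = {1..N}" by auto
    then show "set (map p [1..<N+1]) = set [1..<N+1]" by (simp only: set_map permutes_image[OF assms])
  qed simp
  then have "mset (map (u \<circ> p) [1..<N+1]) = mset (map u [1..<N+1])"
    by (simp only: map_map[symmetric] mset_map)
  from Bprod_mset_eq[OF this] show ?thesis unfolding ZN_def by simp
qed

end

end

section \<open>Expansion along the first site: degree in \<open>w\<^sub>1\<close> and freezing\<close>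

definition vacuum :: "complex list \<Rightarrow> nat list \<Rightarrow> complex" where
  "vacuum ws = (\<lambda>xs. if xs = replicate (length ws) 0 then 1 else 0)"

definition B_rows :: "complex list \<Rightarrow> (complex \<times> nat \<times> nat) list" where
  "B_rows us = map (\<lambda>u. (u,1,0)) us"

definition set_aux_in :: "(complex \<times> nat \<times> nat) list \<Rightarrow> nat list \<Rightarrow> (complex \<times> nat \<times> nat) list" where
  "set_aux_in rs xs = map (\<lambda>((u,\<alpha>,\<gamma>),x). (u,x,\<gamma>)) (zip rs xs)"

lemma set_aux_in_Cons: "set_aux_in ((u,\<alpha>,\<gamma>)#rs) (x#xs) = (u,x,\<gamma>) # set_aux_in rs xs"
  by (simp add: set_aux_in_def)

lemma set_aux_in_frozen:
  "set_aux_in (B_rows (us @ [z])) (replicate (length us) 1 @ [0]) = B_rows us @ [(z,0,0)]"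
  by (induction us) (simp_all add: B_rows_def set_aux_in_def)

lemma prod_list_map_upt: "prod_list (map F [m..<n]) = (\<Prod>j\<in>{m..<n}. F j)"
  using prod.distinct_set_conv_list[of "[m..<n]" F] by simp

context
  fixes t a b c d e f :: complex
begin

text \<open>A row \<open>(u, \<alpha>, \<gamma>)\<close> stands for the monodromy entry \<open>\<langle>\<gamma>|T(u)|\<alpha>\<rangle>\<close> of the auxiliary
  space, acting on vectors of the quantum space; \<open>B(u)\<close> is the row \<open>(u, 1, 0)\<close>.\<close>

definition Tapply :: "complex \<Rightarrow> complex list \<Rightarrow> nat \<Rightarrow> nat \<Rightarrow> (nat list \<Rightarrow> complex) \<Rightarrow> nat list \<Rightarrow> complex" where
  "Tapply u ws \<alpha> \<gamma> \<psi> = (\<lambda>out. \<Sum>inp\<in>configs (length ws). Bch t a b c d e f u ws out inp \<alpha> \<gamma> * \<psi> inp)"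

lemma Bapp_eq_Tapply: "Bapp t a b c d e f u ws \<psi> = Tapply u ws 1 0 \<psi>"
  by (simp add: Bapp_def Tapply_def)

fun Tapply_list :: "complex list \<Rightarrow> (complex \<times> nat \<times> nat) list \<Rightarrow> (nat list \<Rightarrow> complex) \<Rightarrow> nat list \<Rightarrow> complex" where
  "Tapply_list ws [] \<psi> = \<psi>"
| "Tapply_list ws ((u,\<alpha>,\<gamma>)#rs) \<psi> = Tapply u ws \<alpha> \<gamma> (Tapply_list ws rs \<psi>)"

lemma Bprod_eq_Tapply_list: "Bprod t a b c d e f ws us = Tapply_list ws (B_rows us) (vacuum ws)"
  by (induction us) (simp_all add: vacuum_def Bapp_eq_Tapply B_rows_def)

text \<open>\<open>column w rs xs \<delta>\<close> is the weight of the vertices at the first site (inhomogeneity \<open>w\<close>)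
  across the rows \<open>rs\<close>, when the auxiliary lines leave that site in the states \<open>xs\<close> and the
  quantum line enters it from the top in state \<open>\<delta>\<close>.\<close>

fun column :: "complex \<Rightarrow> (complex \<times> nat \<times> nat) list \<Rightarrow> nat list \<Rightarrow> nat \<Rightarrow> complex" where
  "column w [] [] \<delta> = (if \<delta> = 0 then 1 else 0)"
| "column w ((u,\<alpha>,\<gamma>)#rs) (x#xs) \<delta> = (\<Sum>\<beta>\<in>{0::nat,1}. Lel t a b c d e f u w x \<delta> \<alpha> \<beta> * column w rs xs \<beta>)"
| "column w _ _ \<delta> = 0"

lemma Tapply_Cons: "Tapply u (w#ws) \<alpha> \<gamma> \<psi> (\<delta>#out) =
  (\<Sum>x\<in>{0::nat,1}. \<Sum>\<beta>\<in>{0::nat,1}. Lel t a b c d e f u w x \<delta> \<alpha> \<beta> * Tapply u ws x \<gamma> (\<lambda>i. \<psi> (\<beta>#i)) out)"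
  unfolding Tapply_def
  by (simp add: sum_configs_Suc sum_distrib_left sum_distrib_right sum.distrib algebra_simps)

lemma Tapply_sum: "finite S \<Longrightarrow>
  Tapply u ws \<alpha> \<gamma> (\<lambda>i. \<Sum>s\<in>S. k s * h s i) out = (\<Sum>s\<in>S. k s * Tapply u ws \<alpha> \<gamma> (h s) out)"
  unfolding Tapply_def
  by (simp add: sum_distrib_left sum_distrib_right mult.assoc mult.left_commute) (rule sum.swap)

lemma Tapply_scale: "Tapply u ws \<alpha> \<gamma> (\<lambda>i. k * h i) out = k * Tapply u ws \<alpha> \<gamma> h out"
  unfolding Tapply_def by (simp add: sum_distrib_left algebra_simps)

lemma Tapply_list_scale: "Tapply_list ws rs (\<lambda>i. k * h i) out = k * Tapply_list ws rs h out"
proof (induction rs arbitrary: out)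
  case Nil then show ?case by simp
next
  case (Cons r rs)
  obtain u \<alpha> \<gamma> where r: "r = (u,\<alpha>,\<gamma>)" by (cases r) auto
  have "Tapply_list ws rs (\<lambda>i. k * h i) = (\<lambda>i. k * Tapply_list ws rs h i)" using Cons.IH by (rule ext)
  then show ?case by (simp add: r Tapply_scale)
qed

lemma Tapply_list_append: "Tapply_list ws (rs @ rs2) \<psi> = Tapply_list ws rs (Tapply_list ws rs2 \<psi>)"
proof (induction rs)
  case Nil then show ?case by simp
next
  case (Cons r rs)
  obtain u \<alpha> \<gamma> where r: "r = (u,\<alpha>,\<gamma>)" by (cases r) auto
  show ?case using Cons by (simp add: r)
qed

lemma Tapply_list_vacuum_Cons: "Tapply_list (w#ws) rs (vacuum (w#ws)) (\<delta>#out) =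
  (\<Sum>xs\<in>configs (length rs). column w rs xs \<delta> * Tapply_list ws (set_aux_in rs xs) (vacuum ws) out)"
proof (induction rs arbitrary: \<delta> out)
  case Nil
  then show ?case by (simp add: vacuum_def configs_0 set_aux_in_def)
next
  case (Cons r rs)
  obtain u \<alpha> \<gamma> where r: "r = (u,\<alpha>,\<gamma>)" by (cases r) auto
  let ?C = "configs (length rs)"
  have ih: "(\<lambda>i. Tapply_list (w#ws) rs (vacuum (w#ws)) (\<beta>#i)) =
      (\<lambda>i. \<Sum>xs\<in>?C. column w rs xs \<beta> * Tapply_list ws (set_aux_in rs xs) (vacuum ws) i)" for \<beta>
    using Cons.IH by (rule ext)
  have "Tapply_list (w#ws) (r#rs) (vacuum (w#ws)) (\<delta>#out) =
     (\<Sum>x\<in>{0::nat,1}. \<Sum>\<beta>\<in>{0::nat,1}. Lel t a b c d e f u w x \<delta> \<alpha> \<beta> *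
        Tapply u ws x \<gamma> (\<lambda>i. \<Sum>xs\<in>?C. column w rs xs \<beta> * Tapply_list ws (set_aux_in rs xs) (vacuum ws) i) out)"
    by (simp add: r Tapply_Cons ih)
  also have "\<dots> = (\<Sum>x\<in>{0::nat,1}. \<Sum>\<beta>\<in>{0::nat,1}. Lel t a b c d e f u w x \<delta> \<alpha> \<beta> *
        (\<Sum>xs\<in>?C. column w rs xs \<beta> * Tapply u ws x \<gamma> (Tapply_list ws (set_aux_in rs xs) (vacuum ws)) out))"
    by (simp add: Tapply_sum finite_configs)
  also have "\<dots> = (\<Sum>x\<in>{0::nat,1}. \<Sum>xs\<in>?C. (\<Sum>\<beta>\<in>{0::nat,1}. Lel t a b c d e f u w x \<delta> \<alpha> \<beta> * column w rs xs \<beta>)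
        * Tapply u ws x \<gamma> (Tapply_list ws (set_aux_in rs xs) (vacuum ws)) out)"
    by (simp add: sum_distrib_left sum_distrib_right sum.distrib algebra_simps)
  also have "\<dots> = (\<Sum>xs\<in>configs (length (r#rs)). column w (r#rs) xs \<delta> * Tapply_list ws (set_aux_in (r#rs) xs) (vacuum ws) out)"
    by (simp add: r sum_configs_Suc set_aux_in_Cons)
  finally show ?case .
qed

lemma polyfun_le_column:
  "\<delta> \<in> {0,1} \<Longrightarrow> polyfun_le (length us - \<delta>) (\<lambda>x. column x (B_rows us) xs \<delta>)"
proof (induction us arbitrary: xs \<delta>)
  case Nil
  show ?case by (cases xs) (auto simp: B_rows_def polyfun_le_const)
next
  case (Cons u us)
  show ?case
  proof (cases xs)
    case Nil
    then show ?thesis by (simp add: B_rows_def polyfun_le_const)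
  next
    case (Cons y ys)
    let ?L = "\<lambda>\<beta> x. Lel t a b c d e f u x y \<delta> 1 \<beta>" and ?C = "\<lambda>\<beta> x. column x (B_rows us) ys \<beta>"
    have column_Cons: "column x (B_rows (u#us)) xs \<delta> = ?L 0 x * ?C 0 x + ?L 1 x * ?C 1 x" for x
      by (simp add: B_rows_def Cons)
    have "polyfun_le (length (u#us) - \<delta>) (\<lambda>x. ?L 0 x * ?C 0 x)"
    proof (cases "\<delta> = 0")
      case True
      then show ?thesis by (intro polyfun_le_mult[OF polyfun_le_Lel_w Cons.IH]) auto
    next
      case False
      \<comment> \<open>the quantum line turns from 1 to 0 here, through the only weight free of \<open>w\<close>\<close>
      then have "?L 0 x = ?L 0 0" for x using Cons.prems by (simp add: Lel_def)
      then show ?thesis using False Cons.prems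
        by (intro polyfun_le_cong[OF polyfun_le_mult[OF polyfun_le_const Cons.IH[of 0 ys]]]) auto
    qed
    moreover have "polyfun_le (length (u#us) - \<delta>) (\<lambda>x. ?L 1 x * ?C 1 x)"
    proof (cases "us = []")
      case True
      then have "?C 1 x = 0" for x by (cases ys) (simp_all add: B_rows_def)
      then show ?thesis by (simp add: polyfun_le_const)
    next
      case False
      then show ?thesis using Cons.prems by (intro polyfun_le_mult[OF polyfun_le_Lel_w Cons.IH]) auto
    qed
    ultimately show ?thesis unfolding column_Cons by (rule polyfun_le_add)
  qed
qed

text \<open>When \<open>e z + f w = 0\<close> the vertex in the last row vanishes unless the quantum line turns from
  1 to 0 exactly there, so a single configuration of the column survives.\<close>

lemma column_frozen:
  assumes z: "e*z + f*w = 0" and \<delta>: "\<delta> \<in> {0,1}"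
  shows "column w (B_rows (us @ [z])) xs \<delta> =
    (if \<delta> = 1 \<and> xs = replicate (length us) 1 @ [0] then prod_list (map (\<lambda>v. e*v + t*f*w) us) * ((1-t)*c*z) else 0)"
  using \<delta>
proof (induction us arbitrary: xs \<delta>)
  case Nil
  show ?case
  proof (cases xs)
    case Nil then show ?thesis by (simp add: B_rows_def)
  next
    case (Cons y ys)
    then show ?thesis using Nil.prems z
      by (cases ys) (auto simp: B_rows_def Lel_def)
  qed
next
  case (Cons u us)
  show ?case
  proof (cases xs)
    case Nil then show ?thesis by (simp add: B_rows_def)
  next
    case (Cons y ys)
    have "column w (B_rows ((u#us) @ [z])) (y#ys) \<delta> = Lel t a b c d e f u w y \<delta> 1 0 * column w (B_rows (us@[z])) ys 0
        + Lel t a b c d e f u w y \<delta> 1 1 * column w (B_rows (us@[z])) ys 1"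
      by (simp add: B_rows_def)
    also have "\<dots> = Lel t a b c d e f u w y \<delta> 1 1 * column w (B_rows (us@[z])) ys 1"
      using Cons.IH[of 0 ys] by simp
    also have "\<dots> = (if \<delta> = 1 \<and> xs = replicate (length (u#us)) 1 @ [0] then prod_list (map (\<lambda>v. e*v + t*f*w) (u#us)) * ((1-t)*c*z) else 0)"
      using Cons.IH[of 1 ys] Cons.prems \<open>xs = y#ys\<close> by (auto simp: Lel_def)
    finally show ?thesis using \<open>xs = y#ys\<close> by simp
  qed
qed

lemma Bch_vacuum: "Bch t a b c d e f z ws out (replicate (length ws) 0) 0 0 =
   (if out = replicate (length ws) 0 then prod_list (map (\<lambda>w. a*z + b*w) ws) else 0)"
proof (induction ws arbitrary: out)
  case Nil then show ?case by (cases out) simp_all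
next
  case (Cons w ws)
  show ?case
  proof (cases out)
    case Nil then show ?thesis by simp
  next
    case (Cons y ys)
    then show ?thesis using Cons.IH[of ys] by (auto simp: Lel_def)
  qed
qed

lemma Tapply_vacuum: "Tapply z ws 0 0 (vacuum ws) = (\<lambda>out. prod_list (map (\<lambda>w. a*z + b*w) ws) * vacuum ws out)"
proof (rule ext)
  fix out
  have r: "replicate (length ws) 0 \<in> configs (length ws)" by (auto simp: configs_def)
  have "Tapply z ws 0 0 (vacuum ws) out = Bch t a b c d e f z ws out (replicate (length ws) 0) 0 0"
    unfolding Tapply_def vacuum_def using r finite_configs
    by (simp add: if_distrib[where f="\<lambda>x. _ * x"] sum.delta' cong: if_cong)
  then show "Tapply z ws 0 0 (vacuum ws) out = prod_list (map (\<lambda>w. a*z + b*w) ws) * vacuum ws out"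
    by (simp add: Bch_vacuum vacuum_def)
qed

lemma Bprod_column: "Bprod t a b c d e f (w1 # ws) us (1 # r) =
  (\<Sum>xs\<in>configs (length us). column w1 (B_rows us) xs 1 * Tapply_list ws (set_aux_in (B_rows us) xs) (vacuum ws) r)"
proof -
  have "length (B_rows us) = length us" by (simp add: B_rows_def)
  then show ?thesis by (simp only: Bprod_eq_Tapply_list Tapply_list_vacuum_Cons)
qed

lemma ZN_column: "ZN t a b c d e f (Suc n) u w =
  (\<Sum>xs\<in>configs (Suc n). column (w 1) (B_rows (map u [1..<n+2])) xs 1 *
      Tapply_list (map w [2..<n+2]) (set_aux_in (B_rows (map u [1..<n+2])) xs) (vacuum (map w [2..<n+2])) (replicate n 1))"
proof -
  have ws: "map w [1..<n+2] = w 1 # map w [2..<n+2]"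
    using upt_conv_Cons[of 1 "n+2"] by (simp add: numeral_2_eq_2)
  have e: "Suc n + 1 = n + 2" by simp
  have l: "length (map u [1..<n+2]) = Suc n" by simp
  show ?thesis
    unfolding ZN_def e replicate_Suc ws Bprod_column l ..
qed

lemma polyfun_le_ZN_w1: "polyfun_le n (\<lambda>x. ZN t a b c d e f (Suc n) u (w(1:=x)))"
proof -
  let ?U = "B_rows (map u [1..<n+2])" and ?W = "map w [2..<n+2]"
  have "polyfun_le n (\<lambda>x. \<Sum>xs\<in>configs (Suc n).
      column x ?U xs 1 * Tapply_list ?W (set_aux_in ?U xs) (vacuum ?W) (replicate n 1))"
    by (intro polyfun_le_sum finite_configs polyfun_le_mult[OF polyfun_le_column polyfun_le_const]) auto
  moreover have "map (w(1:=x)) [2..<n+2] = ?W" for x by (intro map_cong) auto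
  ultimately show ?thesis by (elim polyfun_le_cong) (simp only: ZN_column fun_upd_same)
qed

lemma Bprod_frozen:
  assumes z: "e * z + f * xz = 0"
  shows "Bprod t a b c d e f (xz # ws) (us @ [z]) (1 # replicate (length us) 1) =
    prod_list (map (\<lambda>v. e*v + t*f*xz) us) * ((1-t)*c*z) * prod_list (map (\<lambda>w. a*z + b*w) ws)
      * Bprod t a b c d e f ws us (replicate (length us) 1)"
proof -
  let ?xz = "replicate (length us) 1 @ [0::nat]"
  let ?M = "\<lambda>xs. Tapply_list ws (set_aux_in (B_rows (us @ [z])) xs) (vacuum ws) (replicate (length us) 1)"
  let ?K = "prod_list (map (\<lambda>v. e*v + t*f*xz) us) * ((1-t)*c*z)"
  have xzc: "?xz \<in> configs (Suc (length us))" by (auto simp: configs_def)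
  have "Bprod t a b c d e f (xz # ws) (us @ [z]) (1 # replicate (length us) 1) =
      (\<Sum>xs\<in>configs (Suc (length us)). column xz (B_rows (us @ [z])) xs 1 * ?M xs)"
    unfolding Bprod_column length_append_singleton ..
  also have "\<dots> = (\<Sum>xs\<in>configs (Suc (length us)). (if xs = ?xz then ?K * ?M ?xz else 0))"
    by (rule sum.cong[OF refl]) (simp add: column_frozen[OF z])
  also have "\<dots> = ?K * ?M ?xz" using xzc finite_configs by (simp add: sum.delta')
  also have "?M ?xz = prod_list (map (\<lambda>w. a*z + b*w) ws) * Bprod t a b c d e f ws us (replicate (length us) 1)"
    by (unfold set_aux_in_frozen Tapply_list_append) (simp add: Tapply_vacuum Tapply_list_scale Bprod_eq_Tapply_list)
  finally show ?thesis by (simp only: mult.assoc)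
qed

lemma ZN_frozen:
  assumes z: "e * u (Suc n) + f * xz = 0"
  shows "ZN t a b c d e f (Suc n) u (w(1:=xz)) =
    (\<Prod>j=1..n. e*u j + t*f*xz) * ((1-t)*c*u (Suc n)) * (\<Prod>k=1..n. a*u (Suc n) + b*w (Suc k))
      * ZN t a b c d e f n u (\<lambda>k. w (Suc k))"
proof -
  have ws0: "map (w(1:=xz)) [1..<n+2] = xz # map w [2..<n+2]"
  proof -
    have "[1..<n+2] = 1 # [2..<n+2]" using upt_conv_Cons[of 1 "n+2"] by (simp add: numeral_2_eq_2)
    moreover have "map (w(1:=xz)) [2..<n+2] = map w [2..<n+2]" by (intro map_cong) auto
    ultimately show ?thesis by simp
  qed
  have us: "map u [1..<n+2] = map u [1..<n+1] @ [u (Suc n)]" by simp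
  have e: "Suc n + 1 = n + 2" by simp
  have l: "length (map u [1..<n+1]) = n" by simp
  have ws1: "map (\<lambda>k. w (Suc k)) [1..<n+1] = map w [2..<n+2]"
  proof -
    have "map Suc [1..<n+1] = [2..<n+2]" using map_Suc_upt[of 1 "n+1"] by (simp add: numeral_2_eq_2)
    moreover have "map (\<lambda>k. w (Suc k)) [1..<n+1] = map w (map Suc [1..<n+1])" by (simp only: map_map o_def)
    ultimately show ?thesis by simp
  qed
  have p1: "prod_list (map (\<lambda>v. e*v + t*f*xz) (map u [1..<n+1])) = (\<Prod>j=1..n. e*u j + t*f*xz)"
    unfolding map_map o_def prod_list_map_upt by (simp add: atLeastLessThanSuc_atLeastAtMost)
  have p2: "prod_list (map (\<lambda>w. a*u (Suc n) + b*w) (map w [2..<n+2])) = (\<Prod>k=1..n. a*u (Suc n) + b*w (Suc k))"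
    unfolding ws1[symmetric] map_map o_def prod_list_map_upt by (simp add: atLeastLessThanSuc_atLeastAtMost)
  have "ZN t a b c d e f (Suc n) u (w(1:=xz)) =
      Bprod t a b c d e f (xz # map w [2..<n+2]) (map u [1..<n+1] @ [u (Suc n)]) (1 # replicate (length (map u [1..<n+1])) 1)"
    unfolding l
    unfolding ZN_def e ws0 us replicate_Suc l ..
  also have "\<dots> = (\<Prod>j=1..n. e*u j + t*f*xz) * ((1-t)*c*u (Suc n)) * (\<Prod>k=1..n. a*u (Suc n) + b*w (Suc k))
      * Bprod t a b c d e f (map w [2..<n+2]) (map u [1..<n+1]) (replicate n 1)"
    unfolding Bprod_frozen[OF z] p1 p2 by (simp only: l)
  also have "Bprod t a b c d e f (map w [2..<n+2]) (map u [1..<n+1]) (replicate n 1) = ZN t a b c d e f n u (\<lambda>k. w (Suc k))"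
    unfolding ZN_def ws1 ..
  finally show ?thesis .
qed

end

section \<open>The right-hand side\<close>

lemma prod_atLeast1_atMost_Suc:
  "(\<Prod>j=1..Suc n. F j) = F 1 * (\<Prod>j=1..n. F (Suc j))"
proof -
  have "{1..Suc n} = insert 1 (Suc ` {1..n})" by (auto simp: image_iff)
  moreover have "(\<Prod>j\<in>insert 1 (Suc ` {1..n}). F j) = F 1 * (\<Prod>j\<in>Suc ` {1..n}. F j)"
    by (rule prod.insert) auto
  moreover have "(\<Prod>j\<in>Suc ` {1..n}. F j) = (\<Prod>j\<in>{1..n}. F (Suc j))"
    by (rule prod.reindex_cong[where l = Suc]) auto
  ultimately show ?thesis by simp
qed

lemma prod_greaterThanAtMost_Suc:
  "(\<Prod>k\<in>{Suc j<..Suc n}. F k) = (\<Prod>k\<in>{j<..n}. F (Suc k))"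
proof -
  have "{Suc j<..Suc n} = Suc ` {j<..n}"
    by (auto simp: image_iff) (metis Suc_le_mono Suc_less_eq2 greaterThanAtMost_iff less_imp_Suc_add)
  then show ?thesis by (simp add: prod.reindex)
qed

lemma prod_atLeast1_lessThan_Suc:
  assumes "1 \<le> j"
  shows "(\<Prod>k\<in>{1..<Suc j}. F k) = F 1 * (\<Prod>k\<in>{1..<j}. F (Suc k))"
proof -
  have "{1..<Suc j} = insert 1 (Suc ` {1..<j})" using assms by (auto simp: image_iff)
  moreover have "(\<Prod>k\<in>insert 1 (Suc ` {1..<j}). F k) = F 1 * (\<Prod>k\<in>Suc ` {1..<j}. F k)"
    by (rule prod.insert) auto
  moreover have "(\<Prod>k\<in>Suc ` {1..<j}. F k) = (\<Prod>k\<in>{1..<j}. F (Suc k))"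
    by (rule prod.reindex_cong[where l = Suc]) auto
  ultimately show ?thesis by simp
qed

definition shift_cycle :: "nat \<Rightarrow> nat \<Rightarrow> nat" where
  "shift_cycle n j = (if j = 1 then Suc n else if j \<in> {2..Suc n} then j - 1 else j)"

lemma shift_cycle_permutes: "shift_cycle n permutes {1..Suc n}"
proof (rule bij_imp_permutes)
  show "bij_betw (shift_cycle n) {1..Suc n} {1..Suc n}"
  proof (rule bij_betw_byWitness[where f' = "\<lambda>j. if j = Suc n then 1 else Suc j"])
    show "\<forall>j\<in>{1..Suc n}. (if shift_cycle n j = Suc n then 1 else Suc (shift_cycle n j)) = j"
      by (auto simp: shift_cycle_def)
    show "\<forall>j\<in>{1..Suc n}. shift_cycle n (if j = Suc n then 1 else Suc j) = j"
      by (auto simp: shift_cycle_def)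
    show "shift_cycle n ` {1..Suc n} \<subseteq> {1..Suc n}"
      by (auto simp: shift_cycle_def)
    show "(\<lambda>j. if j = Suc n then 1 else Suc j) ` {1..Suc n} \<subseteq> {1..Suc n}"
      by auto
  qed
qed (auto simp: shift_cycle_def)

lemma bij_betw_compose_shift_cycle:
  "bij_betw (\<lambda>\<sigma>. \<sigma> \<circ> shift_cycle n) {\<sigma>. \<sigma> permutes {1..n}}
     {\<sigma>. \<sigma> permutes {1..Suc n} \<and> \<sigma> 1 = Suc n}"
proof (rule bij_betw_byWitness[where f' = "\<lambda>\<sigma>. \<sigma> \<circ> inv (shift_cycle n)"])
  let ?\<rho> = "shift_cycle n"
  have \<rho>: "?\<rho> permutes {1..Suc n}" by (rule shift_cycle_permutes)
  have \<rho>1: "?\<rho> 1 = Suc n" by (simp add: shift_cycle_def)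
  show "\<forall>\<sigma>\<in>{\<sigma>. \<sigma> permutes {1..n}}. \<sigma> \<circ> ?\<rho> \<circ> inv ?\<rho> = \<sigma>"
    using permutes_inv_o(1)[OF \<rho>] by (simp add: comp_assoc)
  show "\<forall>\<sigma>\<in>{\<sigma>. \<sigma> permutes {1..Suc n} \<and> \<sigma> 1 = Suc n}. \<sigma> \<circ> inv ?\<rho> \<circ> ?\<rho> = \<sigma>"
    using permutes_inv_o(2)[OF \<rho>] by (simp add: comp_assoc)
  show "(\<lambda>\<sigma>. \<sigma> \<circ> ?\<rho>) ` {\<sigma>. \<sigma> permutes {1..n}} \<subseteq> {\<sigma>. \<sigma> permutes {1..Suc n} \<and> \<sigma> 1 = Suc n}"
  proof clarify
    fix \<sigma> assume \<sigma>: "\<sigma> permutes {1..n}"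
    then have "\<sigma> permutes {1..Suc n}" by (rule permutes_subset) auto
    then have "\<sigma> \<circ> ?\<rho> permutes {1..Suc n}" by (rule permutes_compose[OF \<rho>])
    moreover have "(\<sigma> \<circ> ?\<rho>) 1 = Suc n" using \<rho>1 permutes_not_in[OF \<sigma>] by simp
    ultimately show "\<sigma> \<circ> ?\<rho> permutes {1..Suc n} \<and> (\<sigma> \<circ> ?\<rho>) 1 = Suc n" ..
  qed
  show "(\<lambda>\<sigma>. \<sigma> \<circ> inv ?\<rho>) ` {\<sigma>. \<sigma> permutes {1..Suc n} \<and> \<sigma> 1 = Suc n} \<subseteq> {\<sigma>. \<sigma> permutes {1..n}}"
  proof clarify
    fix \<sigma> assume \<sigma>: "\<sigma> permutes {1..Suc n}" "\<sigma> 1 = Suc n"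
    have "\<sigma> \<circ> inv ?\<rho> permutes {1..Suc n}"
      using permutes_compose[OF permutes_inv[OF \<rho>] \<sigma>(1)] .
    moreover have "(\<sigma> \<circ> inv ?\<rho>) x = x" if "x \<in> {1..Suc n} - {1..n}" for x
    proof -
      have "x = Suc n" using that by auto
      moreover have "inv ?\<rho> (Suc n) = 1" by (subst permutes_inv_eq[OF \<rho>]) (rule \<rho>1)
      ultimately show ?thesis using \<sigma>(2) by simp
    qed
    ultimately show "\<sigma> \<circ> inv ?\<rho> permutes {1..n}" by (rule permutes_superset)
  qed
qed

context
  fixes t a b c d e f :: complex
begin

text \<open>\<open>Zrhs\<close> is the right-hand side of the theorem with the Vandermonde-like product over pairs
  kept inside the sum and evaluated at the permuted parameters \<open>u \<circ> \<sigma>\<close>, which makes the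
  symmetry in \<open>u\<close> evident.\<close>

definition Zrhs_term :: "nat \<Rightarrow> (nat \<Rightarrow> complex) \<Rightarrow> (nat \<Rightarrow> complex) \<Rightarrow> complex" where
  "Zrhs_term N v w = (\<Prod>j=1..N. \<Prod>k\<in>{j<..N}. (t*v j - v k)/(v j - v k)) *
     (\<Prod>j=1..N. \<Prod>k\<in>{j<..N}. a*v j + b*w k) * (\<Prod>j=1..N. \<Prod>k\<in>{1..<j}. e*v j + f*w k)"

definition Zrhs :: "nat \<Rightarrow> (nat \<Rightarrow> complex) \<Rightarrow> (nat \<Rightarrow> complex) \<Rightarrow> complex" where
  "Zrhs N u w = (\<Prod>j=1..N. (1-t)*c*u j) * (\<Sum>\<sigma> | \<sigma> permutes {1..N}. Zrhs_term N (u \<circ> \<sigma>) w)"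

lemma Zrhs_term_cong:
  "(\<And>j. j \<in> {1..N} \<Longrightarrow> v j = v' j) \<Longrightarrow> (\<And>k. k \<in> {1..N} \<Longrightarrow> w k = w' k) \<Longrightarrow>
    Zrhs_term N v w = Zrhs_term N v' w'"
  unfolding Zrhs_term_def by (intro arg_cong2[where f = "(*)"] prod.cong refl) auto

lemma Zrhs_0: "Zrhs 0 u w = 1"
  by (simp add: Zrhs_def Zrhs_term_def)

lemma Zrhs_permute:
  assumes "p permutes {1..N}"
  shows "Zrhs N (u \<circ> p) w = Zrhs N u w"
proof -
  have "(\<Prod>j=1..N. (1-t)*c*(u \<circ> p) j) = (\<Prod>j=1..N. (1-t)*c*u j)"
    using prod.permute[OF assms, of "\<lambda>j. (1-t)*c*u j"] by (simp add: o_def)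
  moreover have "(\<Sum>\<sigma> | \<sigma> permutes {1..N}. Zrhs_term N (u \<circ> p \<circ> \<sigma>) w) =
      (\<Sum>\<sigma> | \<sigma> permutes {1..N}. Zrhs_term N (u \<circ> \<sigma>) w)"
    using setum_permutations_compose_left[OF assms, of "\<lambda>\<sigma>. Zrhs_term N (u \<circ> \<sigma>) w"]
    by (simp add: o_assoc)
  ultimately show ?thesis unfolding Zrhs_def by simp
qed

lemma Zrhs_term_Suc: "Zrhs_term (Suc n) v w =
   (\<Prod>k=1..n. (t*v 1 - v (Suc k))/(v 1 - v (Suc k))) * (\<Prod>k=1..n. a*v 1 + b*w (Suc k)) *
   (\<Prod>j=1..n. e*v (Suc j) + f*w 1) * Zrhs_term n (\<lambda>j. v (Suc j)) (\<lambda>k. w (Suc k))"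
proof -
  have gt1: "{1<..Suc n} = {Suc 0<..Suc n}" by simp
  have gt: "(\<Prod>k\<in>{0<..n}. F k) = (\<Prod>k=1..n. F k)" for F :: "nat \<Rightarrow> complex"
    by (rule prod.cong) auto
  have lt1: "(\<Prod>k\<in>{1::nat..<1}. F k) = 1" for F :: "nat \<Rightarrow> complex" by simp
  have lt: "(\<Prod>j=1..n. \<Prod>k\<in>{1..<Suc j}. e*v (Suc j) + f*w k) =
     (\<Prod>j=1..n. e*v (Suc j) + f*w 1) * (\<Prod>j=1..n. \<Prod>k\<in>{1..<j}. e*v (Suc j) + f*w (Suc k))"
    unfolding prod.distrib[symmetric] by (intro prod.cong refl prod_atLeast1_lessThan_Suc) auto
  show ?thesis
    unfolding Zrhs_term_def prod_atLeast1_atMost_Suc gt1 prod_greaterThanAtMost_Suc gt lt1 lt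
    by (simp only: mult_ac mult_1_left)
qed

lemma polyfun_le_Zrhs_w1: "polyfun_le n (\<lambda>x. Zrhs (Suc n) u (w(1:=x)))"
proof -
  have "polyfun_le n (\<lambda>x. Zrhs_term (Suc n) v (w(1:=x)))" for v
  proof -
    have "polyfun_le (\<Sum>j=1..n. 1) (\<lambda>x. \<Prod>j=1..n. e*v (Suc j) + f*x)"
      by (intro polyfun_le_prod polyfun_le_affine) simp
    then have "polyfun_le n (\<lambda>x.
       ((\<Prod>k=1..n. (t*v 1 - v (Suc k))/(v 1 - v (Suc k))) * (\<Prod>k=1..n. a*v 1 + b*w (Suc k))) *
       (\<Prod>j=1..n. e*v (Suc j) + f*x) * Zrhs_term n (\<lambda>j. v (Suc j)) (\<lambda>k. w (Suc k)))"
      by (intro polyfun_le_cmult polyfun_le_multc) simp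
    moreover have "Zrhs_term n (\<lambda>j. v (Suc j)) (\<lambda>k. (w(1:=x)) (Suc k)) =
        Zrhs_term n (\<lambda>j. v (Suc j)) (\<lambda>k. w (Suc k))" for x
      by (rule Zrhs_term_cong) auto
    ultimately show ?thesis by (elim polyfun_le_cong) (simp add: Zrhs_term_Suc[of n v])
  qed
  then show ?thesis unfolding Zrhs_def
    by (intro polyfun_le_cmult polyfun_le_sum) (simp_all add: finite_permutations)
qed
end

section \<open>Comparison of both sides\<close>

lemma bij_betw_sort_permuted_pairs:
  fixes \<sigma> :: "nat \<Rightarrow> nat"
  assumes \<sigma>: "\<sigma> permutes {1..N}"
  shows "bij_betw (\<lambda>(j,k). if \<sigma> j < \<sigma> k then (\<sigma> j, \<sigma> k) else (\<sigma> k, \<sigma> j))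
    (SIGMA j:{1..N}. {j<..N}) (SIGMA j:{1..N}. {j<..N})"
proof -
  define P where "P = (SIGMA j:{1..N}. {j<..N})"
  define s where "s = (\<lambda>(j::nat,k). if \<sigma> j < \<sigma> k then (\<sigma> j, \<sigma> k) else (\<sigma> k, \<sigma> j))"
  have \<sigma>_in: "\<sigma> j \<in> {1..N}" if "j \<in> {1..N}" for j using permutes_in_image[OF \<sigma>] that by simp
  have \<sigma>_inj: "j = k" if "\<sigma> j = \<sigma> k" "j \<in> {1..N}" "k \<in> {1..N}" for j k
    using inj_onD[OF permutes_inj_on[OF \<sigma>]] that by blast
  have pair: "j \<in> {1..N}" "k \<in> {1..N}" "j < k" if "(j,k) \<in> P" for j k
    using that by (auto simp: P_def)
  have "s (j,k) \<in> P" if "(j,k) \<in> P" for j k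
  proof -
    have "\<sigma> j \<noteq> \<sigma> k" using \<sigma>_inj pair[OF that] by fastforce
    then show ?thesis using \<sigma>_in pair[OF that] by (auto simp: s_def P_def)
  qed
  then have "s ` P \<subseteq> P" by (auto simp: image_subset_iff)
  moreover have inj: "inj_on s P"
  proof (rule inj_onI, clarify)
    fix j k j' k' assume p: "(j,k) \<in> P" "(j',k') \<in> P" and eq: "s (j,k) = s (j',k')"
    from eq have "(\<sigma> j = \<sigma> j' \<and> \<sigma> k = \<sigma> k') \<or> (\<sigma> j = \<sigma> k' \<and> \<sigma> k = \<sigma> j')"
      by (auto simp: s_def split: if_splits)
    then show "j = j' \<and> k = k'"
      using \<sigma>_inj pair[OF p(1)] pair[OF p(2)] by (metis less_asym)
  qed
  ultimately have "s ` P = P" by (intro endo_inj_surj) (simp_all add: P_def)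
  with inj have "bij_betw s P P" by (simp add: bij_betw_def)
  then show ?thesis by (simp only: s_def P_def)
qed

lemma prod_pairs_permutes:
  fixes g :: "nat \<Rightarrow> nat \<Rightarrow> 'a::field"
  assumes \<sigma>: "\<sigma> permutes {1..N}"
    and nonzero: "\<And>j k. j \<in> {1..N} \<Longrightarrow> k \<in> {1..N} \<Longrightarrow> j < k \<Longrightarrow> g j k \<noteq> 0"
  shows "(\<Prod>j=1..N. \<Prod>k\<in>{j<..N}. g (\<sigma> j) (\<sigma> k)) =
    (\<Prod>j=1..N. \<Prod>k\<in>{j<..N}. g j k) * (\<Prod>(j,k)\<in>Inv N \<sigma>. g (\<sigma> j) (\<sigma> k) / g (\<sigma> k) (\<sigma> j))"
proof -
  define P where "P = (SIGMA j:{1..N}. {j<..N})"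
  define s where "s = (\<lambda>(j::nat,k). if \<sigma> j < \<sigma> k then (\<sigma> j, \<sigma> k) else (\<sigma> k, \<sigma> j))"
  define r where "r = (\<lambda>(j,k). g (\<sigma> j) (\<sigma> k) / g (\<sigma> k) (\<sigma> j))"
  have nested: "(\<Prod>j=1..N. \<Prod>k\<in>{j<..N}. F j k) = (\<Prod>(j,k)\<in>P. F j k)" for F :: "nat \<Rightarrow> nat \<Rightarrow> 'a"
    by (simp add: P_def prod.Sigma)
  have reindex: "(\<Prod>p\<in>P. g' (s p)) = (\<Prod>p\<in>P. g' p)" for g'
    using bij_betw_sort_permuted_pairs[OF \<sigma>, folded s_def P_def] by (rule prod.reindex_bij_betw)
  have split_inversion: "g (\<sigma> j) (\<sigma> k) = case_prod g (s (j,k)) * (if (j,k) \<in> Inv N \<sigma> then r (j,k) else 1)"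
    if jk: "(j,k) \<in> P" for j k
  proof (cases "\<sigma> j < \<sigma> k")
    case True
    then show ?thesis by (simp add: s_def Inv_def)
  next
    case False
    from jk have j: "j \<in> {1..N}" and k: "k \<in> {1..N}" and "j < k" by (auto simp: P_def)
    then have "\<sigma> j \<noteq> \<sigma> k" using inj_onD[OF permutes_inj_on[OF \<sigma>], of j k] by auto
    with False have lt: "\<sigma> k < \<sigma> j" by simp
    with \<open>j < k\<close> j k have "(j,k) \<in> Inv N \<sigma>" by (simp add: Inv_def)
    moreover have "\<sigma> j \<in> {1..N}" "\<sigma> k \<in> {1..N}" using j k permutes_in_image[OF \<sigma>] by auto
    then have "g (\<sigma> k) (\<sigma> j) \<noteq> 0" using nonzero lt by blast
    ultimately show ?thesis using False by (simp add: s_def r_def)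
  qed
  have "(\<Prod>j=1..N. \<Prod>k\<in>{j<..N}. g (\<sigma> j) (\<sigma> k)) =
      (\<Prod>p\<in>P. case_prod g (s p) * (if p \<in> Inv N \<sigma> then r p else 1))"
    unfolding nested by (intro prod.cong refl) (auto simp: split_inversion)
  also have "\<dots> = (\<Prod>p\<in>P. case_prod g p) * (\<Prod>p\<in>P. if p \<in> Inv N \<sigma> then r p else 1)"
    by (simp only: prod.distrib reindex)
  also have "(\<Prod>p\<in>P. if p \<in> Inv N \<sigma> then r p else 1) = (\<Prod>p\<in>Inv N \<sigma>. r p)"
  proof -
    have "Inv N \<sigma> \<subseteq> P" by (auto simp: Inv_def P_def)
    then show ?thesis
      using prod.inter_restrict[of P r "Inv N \<sigma>"] by (simp add: P_def Int_absorb1)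
  qed
  finally show ?thesis unfolding nested r_def by (simp only: case_prod_beta')
qed

lemma swap_ratio:
  fixes p q t :: complex
  assumes "p \<noteq> q"
  shows "((t*p - q)/(p - q)) / ((t*q - p)/(q - p)) = (q - t*p)/(t*q - p)"
proof -
  have "(t*q - p)/(q - p) = (p - t*q)/(p - q)" by (metis minus_diff_eq minus_divide_divide)
  then have "((t*p - q)/(p - q)) / ((t*q - p)/(q - p)) = (t*p - q)/(p - t*q)"
    using assms by simp
  also have "\<dots> = (q - t*p)/(t*q - p)" by (metis minus_diff_eq minus_divide_divide)
  finally show ?thesis .
qed

context
  fixes t a b c d e f :: complex
begin

lemma frozen_ratio:
  fixes p q x :: complex
  assumes "p \<noteq> q" and "e*p + f*x = 0"
  shows "(t*p - q)/(p - q) * (e*q + f*x) = e*q + t*f*x"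
proof -
  have fx: "f*x = - (e*p)" by (metis assms(2) neg_eq_iff_add_eq_0)
  have "(t*p - q)/(p - q) * (e*q + f*x) = (t*p - q)/(p - q) * (p - q) * (- e)"
    by (simp add: fx algebra_simps)
  also have "\<dots> = (t*p - q) * (- e)" using assms(1) by simp
  also have "\<dots> = e*q + t*(f*x)" by (simp add: fx algebra_simps)
  finally show ?thesis by (simp only: mult.assoc)
qed

lemma Zrhs_term_eq_0:
  assumes \<sigma>: "\<sigma> permutes {1..Suc n}" "\<sigma> 1 \<noteq> Suc n" and frozen: "e * u (Suc n) + f * w 1 = 0"
  shows "Zrhs_term t a b e f (Suc n) (u \<circ> \<sigma>) w = 0"
proof -
  have "Suc n \<in> \<sigma> ` {1..Suc n}" using permutes_image[OF \<sigma>(1)] by simp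
  then obtain j where j: "j \<in> {1..Suc n}" "\<sigma> j = Suc n" by auto
  with \<sigma>(2) have "1 \<in> {1..<j}" by (cases "j = 1") auto
  then have "(\<Prod>k\<in>{1..<j}. e * (u \<circ> \<sigma>) j + f * w k) = 0"
    using frozen j(2) by (intro prod_zero) auto
  then have "(\<Prod>j=1..Suc n. \<Prod>k\<in>{1..<j}. e * (u \<circ> \<sigma>) j + f * w k) = 0"
    using j(1) by (intro prod_zero) auto
  then show ?thesis by (simp add: Zrhs_term_def)
qed

lemma Zrhs_term_compose_shift_cycle:
  assumes \<sigma>: "\<sigma> permutes {1..n}" and frozen: "e * u (Suc n) + f * x = 0"
    and inj: "inj_on u {1..Suc n}"
  shows "Zrhs_term t a b e f (Suc n) (u \<circ> (\<sigma> \<circ> shift_cycle n)) (w(1:=x)) =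
    (\<Prod>j=1..n. e*u j + t*f*x) * (\<Prod>k=1..n. a*u (Suc n) + b*w (Suc k)) *
    Zrhs_term t a b e f n (u \<circ> \<sigma>) (\<lambda>k. w (Suc k))"
proof -
  let ?v = "u \<circ> (\<sigma> \<circ> shift_cycle n)"
  have v1: "?v 1 = u (Suc n)" using permutes_not_in[OF \<sigma>] by (simp add: shift_cycle_def)
  have v_Suc: "?v (Suc k) = u (\<sigma> k)" if "k \<in> {1..n}" for k using that by (simp add: shift_cycle_def)
  have "(\<Prod>k=1..n. (t*?v 1 - ?v (Suc k))/(?v 1 - ?v (Suc k))) * (\<Prod>k=1..n. e*?v (Suc k) + f*x)
      = (\<Prod>k=1..n. (t*u (Suc n) - u (\<sigma> k))/(u (Suc n) - u (\<sigma> k)) * (e*u (\<sigma> k) + f*x))"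
    unfolding prod.distrib[symmetric] by (intro prod.cong refl) (simp only: v1 v_Suc)
  also have "\<dots> = (\<Prod>k=1..n. (t*u (Suc n) - u k)/(u (Suc n) - u k) * (e*u k + f*x))"
    using prod.permute[OF \<sigma>, of "\<lambda>k. (t*u (Suc n) - u k)/(u (Suc n) - u k) * (e*u k + f*x)"]
    by (simp add: o_def)
  also have "\<dots> = (\<Prod>k=1..n. e*u k + t*f*x)"
  proof (intro prod.cong refl frozen_ratio[OF _ frozen])
    fix k assume "k \<in> {1..n}"
    then show "u (Suc n) \<noteq> u k" using inj_onD[OF inj, of "Suc n" k] by auto
  qed
  finally have ratio: "(\<Prod>k=1..n. (t*?v 1 - ?v (Suc k))/(?v 1 - ?v (Suc k))) *
      (\<Prod>k=1..n. e*?v (Suc k) + f*x) = (\<Prod>k=1..n. e*u k + t*f*x)" .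
  have a_part: "(\<Prod>k=1..n. a*?v 1 + b*(w(1:=x)) (Suc k)) = (\<Prod>k=1..n. a*u (Suc n) + b*w (Suc k))"
    by (simp only: v1, simp)
  have rest: "Zrhs_term t a b e f n (\<lambda>j. ?v (Suc j)) (\<lambda>k. (w(1:=x)) (Suc k)) =
      Zrhs_term t a b e f n (u \<circ> \<sigma>) (\<lambda>k. w (Suc k))"
    by (rule Zrhs_term_cong) (auto simp: shift_cycle_def)
  have "Zrhs_term t a b e f (Suc n) ?v (w(1:=x)) =
      ((\<Prod>k=1..n. (t*?v 1 - ?v (Suc k))/(?v 1 - ?v (Suc k))) * (\<Prod>k=1..n. e*?v (Suc k) + f*x)) *
      (\<Prod>k=1..n. a*?v 1 + b*(w(1:=x)) (Suc k)) *
      Zrhs_term t a b e f n (\<lambda>j. ?v (Suc j)) (\<lambda>k. (w(1:=x)) (Suc k))"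
    by (simp only: Zrhs_term_Suc fun_upd_same mult_ac)
  then show ?thesis by (simp only: ratio a_part rest)
qed

lemma Zrhs_frozen:
  assumes frozen: "e * u (Suc n) + f * x = 0" and inj: "inj_on u {1..Suc n}"
  shows "Zrhs t a b c e f (Suc n) u (w(1:=x)) =
    (\<Prod>j=1..n. e*u j + t*f*x) * ((1-t)*c*u (Suc n)) * (\<Prod>k=1..n. a*u (Suc n) + b*w (Suc k)) *
    Zrhs t a b c e f n u (\<lambda>k. w (Suc k))"
proof -
  let ?Z = "Zrhs_term t a b e f" and ?W = "w(1:=x)"
  let ?K = "(\<Prod>j=1..n. e*u j + t*f*x) * (\<Prod>k=1..n. a*u (Suc n) + b*w (Suc k))"
  have "(\<Sum>\<sigma> | \<sigma> permutes {1..Suc n}. ?Z (Suc n) (u \<circ> \<sigma>) ?W) =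
      (\<Sum>\<sigma> | \<sigma> permutes {1..Suc n} \<and> \<sigma> 1 = Suc n. ?Z (Suc n) (u \<circ> \<sigma>) ?W)"
    using frozen by (intro sum.mono_neutral_right) (auto simp: finite_permutations Zrhs_term_eq_0)
  also have "\<dots> = (\<Sum>\<sigma> | \<sigma> permutes {1..n}. ?Z (Suc n) (u \<circ> (\<sigma> \<circ> shift_cycle n)) ?W)"
    by (rule sum.reindex_bij_betw[OF bij_betw_compose_shift_cycle, symmetric])
  also have "\<dots> = ?K * (\<Sum>\<sigma> | \<sigma> permutes {1..n}. ?Z n (u \<circ> \<sigma>) (\<lambda>k. w (Suc k)))"
    unfolding sum_distrib_left
    by (intro sum.cong refl, rule Zrhs_term_compose_shift_cycle[OF _ frozen inj], simp)
  moreover have "(\<Prod>j=1..Suc n. (1-t)*c*u j) = (\<Prod>j=1..n. (1-t)*c*u j) * ((1-t)*c*u (Suc n))"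
    by (simp add: atLeastAtMostSuc_conv mult.commute)
  ultimately show ?thesis
    unfolding Zrhs_def by (simp only: mult_ac)
qed

lemma Zrhs_term_permutes:
  assumes \<sigma>: "\<sigma> permutes {1..N}"
    and distinct: "\<And>j k. j \<in> {1..N} \<Longrightarrow> k \<in> {1..N} \<Longrightarrow> j < k \<Longrightarrow> u j \<noteq> u k"
    and t_distinct: "\<And>j k. j \<in> {1..N} \<Longrightarrow> k \<in> {1..N} \<Longrightarrow> j < k \<Longrightarrow> t * u j \<noteq> u k"
  shows "Zrhs_term t a b e f N (u \<circ> \<sigma>) w =
    (\<Prod>j=1..N. \<Prod>k\<in>{j<..N}. (t*u j - u k) / (u j - u k)) *
    ((\<Prod>(j,k)\<in>Inv N \<sigma>. (u (\<sigma> k) - t*u (\<sigma> j)) / (t*u (\<sigma> k) - u (\<sigma> j))) *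
     (\<Prod>j=1..N. \<Prod>k\<in>{j<..N}. a*u (\<sigma> j) + b*w k) *
     (\<Prod>j=1..N. \<Prod>k\<in>{1..<j}. e*u (\<sigma> j) + f*w k))"
proof -
  let ?g = "\<lambda>p q. (t*u p - u q)/(u p - u q)"
  have "(\<Prod>j=1..N. \<Prod>k\<in>{j<..N}. ?g (\<sigma> j) (\<sigma> k)) =
      (\<Prod>j=1..N. \<Prod>k\<in>{j<..N}. ?g j k) * (\<Prod>(j,k)\<in>Inv N \<sigma>. ?g (\<sigma> j) (\<sigma> k) / ?g (\<sigma> k) (\<sigma> j))"
    using distinct t_distinct by (intro prod_pairs_permutes[OF \<sigma>]) auto
  also have "(\<Prod>(j,k)\<in>Inv N \<sigma>. ?g (\<sigma> j) (\<sigma> k) / ?g (\<sigma> k) (\<sigma> j)) =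
      (\<Prod>(j,k)\<in>Inv N \<sigma>. (u (\<sigma> k) - t*u (\<sigma> j)) / (t*u (\<sigma> k) - u (\<sigma> j)))"
  proof (intro prod.cong refl, clarify)
    fix j k assume "(j,k) \<in> Inv N \<sigma>"
    then have "\<sigma> j \<in> {1..N}" "\<sigma> k \<in> {1..N}" "\<sigma> k < \<sigma> j"
      using permutes_in_image[OF \<sigma>] by (auto simp: Inv_def)
    then have "u (\<sigma> j) \<noteq> u (\<sigma> k)" using distinct by metis
    then show "?g (\<sigma> j) (\<sigma> k) / ?g (\<sigma> k) (\<sigma> j) = (u (\<sigma> k) - t*u (\<sigma> j)) / (t*u (\<sigma> k) - u (\<sigma> j))"
      by (rule swap_ratio)
  qed
  finally show ?thesis unfolding Zrhs_term_def o_apply by (simp only: mult.assoc)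
qed

context
  assumes free_fermion: "c*d + a*f = 0" "t*c*d + b*e = 0"
    and a_nonzero: "a \<noteq> 0" and b_nonzero: "b \<noteq> 0" and e_nonzero: "e \<noteq> 0" and f_nonzero: "f \<noteq> 0"
begin

lemma ZN_eq_Zrhs_at_frozen_point:
  assumes IH: "\<And>u w. inj_on u {1..n} \<Longrightarrow> ZN t a b c d e f n u w = Zrhs t a b c e f n u w"
    and inj_u: "inj_on u {1..Suc n}" and j: "j \<in> {1..Suc n}"
  shows "ZN t a b c d e f (Suc n) u (w(1 := - (e * u j / f))) =
    Zrhs t a b c e f (Suc n) u (w(1 := - (e * u j / f)))"
proof -
  let ?x = "- (e * u j / f)" and ?\<tau> = "Transposition.transpose j (Suc n)"
  let ?u = "u \<circ> ?\<tau>"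
  have \<tau>: "?\<tau> permutes {1..Suc n}" using j by (intro permutes_swap_id) auto
  have frozen: "e * ?u (Suc n) + f * ?x = 0" using f_nonzero by (simp add: field_simps)
  have inj: "inj_on ?u {1..Suc n}"
  proof (rule comp_inj_on)
    show "inj_on ?\<tau> {1..Suc n}" using permutes_inj_on[OF \<tau>] .
    show "inj_on u (?\<tau> ` {1..Suc n})" using inj_u permutes_image[OF \<tau>] by simp
  qed
  have "ZN t a b c d e f (Suc n) u (w(1 := ?x)) = ZN t a b c d e f (Suc n) ?u (w(1 := ?x))"
    by (rule ZN_permute[OF free_fermion a_nonzero b_nonzero \<tau>, symmetric])
  also have "\<dots> = (\<Prod>j=1..n. e*?u j + t*f*?x) * ((1-t)*c*?u (Suc n)) *
      (\<Prod>k=1..n. a*?u (Suc n) + b*w (Suc k)) * ZN t a b c d e f n ?u (\<lambda>k. w (Suc k))"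
    by (rule ZN_frozen[where u = "u \<circ> Transposition.transpose j (Suc n)" and n = n and xz = "?x"
        and w = w, OF frozen])
  also have "ZN t a b c d e f n ?u (\<lambda>k. w (Suc k)) = Zrhs t a b c e f n ?u (\<lambda>k. w (Suc k))"
    by (rule IH) (rule inj_on_subset[OF inj], auto)
  also have "(\<Prod>j=1..n. e*?u j + t*f*?x) * ((1-t)*c*?u (Suc n)) *
      (\<Prod>k=1..n. a*?u (Suc n) + b*w (Suc k)) * Zrhs t a b c e f n ?u (\<lambda>k. w (Suc k)) =
      Zrhs t a b c e f (Suc n) ?u (w(1 := ?x))"
    by (rule Zrhs_frozen[where u = "u \<circ> Transposition.transpose j (Suc n)" and n = n and x = "?x"
        and w = w, OF frozen inj, symmetric])
  also have "\<dots> = Zrhs t a b c e f (Suc n) u (w(1 := ?x))" by (rule Zrhs_permute[OF \<tau>])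
  finally show ?thesis .
qed

lemma ZN_eq_Zrhs: "inj_on u {1..N} \<Longrightarrow> ZN t a b c d e f N u w = Zrhs t a b c e f N u w"
proof (induction N arbitrary: u w)
  case 0
  show ?case by (simp add: ZN_def Zrhs_0)
next
  case (Suc n)
  let ?root = "\<lambda>j. - (e * u j / f)"
  have at_roots: "ZN t a b c d e f (Suc n) u (w(1 := x)) = Zrhs t a b c e f (Suc n) u (w(1 := x))"
    if "x \<in> ?root ` {1..Suc n}" for x
  proof -
    from that obtain j where "j \<in> {1..Suc n}" "x = ?root j" by blast
    \<comment> \<open>\<open>One_nat_def\<close> would rewrite the \<open>1\<close> in \<open>w(1 := x)\<close> and block the rewrite rules\<close>
    then show ?thesis using ZN_eq_Zrhs_at_frozen_point[OF Suc.IH Suc.prems] by (simp del: One_nat_def)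
  qed
  have "inj_on ?root {1..Suc n}"
  proof (rule inj_onI)
    fix j k assume "j \<in> {1..Suc n}" "k \<in> {1..Suc n}" "?root j = ?root k"
    then show "j = k"
      using e_nonzero f_nonzero Suc.prems by (auto simp: field_simps dest: inj_onD)
  qed
  then have card_roots: "card (?root ` {1..Suc n}) = Suc n" by (simp add: card_image)
  have "polyfun_le n (\<lambda>x. ZN t a b c d e f (Suc n) u (w(1 := x)) - Zrhs t a b c e f (Suc n) u (w(1 := x)))"
    by (rule polyfun_le_diff[OF polyfun_le_ZN_w1 polyfun_le_Zrhs_w1])
  then have "ZN t a b c d e f (Suc n) u (w(1 := w 1)) - Zrhs t a b c e f (Suc n) u (w(1 := w 1)) = 0"
    by (rule polyfun_le_eq_0[of _ _ "?root ` {1..Suc n}"])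
      (simp_all del: One_nat_def add: card_roots at_roots)
  then show ?case by simp
qed

end

end

theorem mainTheorem5:
  fixes t a b c d e f :: complex and N :: nat and u w :: "nat \<Rightarrow> complex"
  assumes "a \<noteq> 0" "b \<noteq> 0" "c \<noteq> 0" "d \<noteq> 0" "e \<noteq> 0" "f \<noteq> 0" "t \<noteq> 1"
    and "c*d + a*f = 0" and "t*c*d + b*e = 0"
    and "N \<ge> 1"
    and "\<And>j k. j \<in> {1..N} \<Longrightarrow> k \<in> {1..N} \<Longrightarrow> j < k \<Longrightarrow> u j \<noteq> u k"
    and "\<And>j k. j \<in> {1..N} \<Longrightarrow> k \<in> {1..N} \<Longrightarrow> j < k \<Longrightarrow> t * u j \<noteq> u k"
  shows "ZN t a b c d e f N u w =
    (\<Prod>j=1..N. (1-t)*c*u j) *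
    (\<Prod>j=1..N. \<Prod>k\<in>{j<..N}. (t*u j - u k) / (u j - u k)) *
    (\<Sum>\<sigma> | \<sigma> permutes {1..N}.
        (\<Prod>(j,k)\<in>Inv N \<sigma>. (u (\<sigma> k) - t*u (\<sigma> j)) / (t*u (\<sigma> k) - u (\<sigma> j))) *
        (\<Prod>j=1..N. \<Prod>k\<in>{j<..N}. a*u (\<sigma> j) + b*w k) *
        (\<Prod>j=1..N. \<Prod>k\<in>{1..<j}. e*u (\<sigma> j) + f*w k))"
proof -
  have "inj_on u {1..N}"
    using assms(11) by (intro inj_onI) (metis linorder_neqE_nat)
  then have "ZN t a b c d e f N u w = Zrhs t a b c e f N u w"
    by (rule ZN_eq_Zrhs[OF assms(8,9,1,2,5,6)])
  also have "\<dots> = (\<Prod>j=1..N. (1-t)*c*u j) * (\<Sum>\<sigma> | \<sigma> permutes {1..N}.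
      (\<Prod>j=1..N. \<Prod>k\<in>{j<..N}. (t*u j - u k) / (u j - u k)) *
      ((\<Prod>(j,k)\<in>Inv N \<sigma>. (u (\<sigma> k) - t*u (\<sigma> j)) / (t*u (\<sigma> k) - u (\<sigma> j))) *
       (\<Prod>j=1..N. \<Prod>k\<in>{j<..N}. a*u (\<sigma> j) + b*w k) *
       (\<Prod>j=1..N. \<Prod>k\<in>{1..<j}. e*u (\<sigma> j) + f*w k)))"
    unfolding Zrhs_def using assms(11,12)
    by (intro arg_cong2[where f = "(*)"] refl sum.cong Zrhs_term_permutes) auto
  finally show ?thesis by (simp only: sum_distrib_left[symmetric] mult.assoc)
qed

end
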